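(* Let $q_1,q_2$ each be functions as in the context and define $c(t)=\int_{-\infty}^{\infty}e^{-q_1(v)}e^{-q_2(t-v)}\,dv$ for $t\in\mathbb{R}$. Then $c$ is an even, strictly positive function on $\mathbb{R}$ with $c'(t)<0$ for all $t>0$; equivalently $c(t)=e^{-g(t)}$ for an even function $g$ with $g'(t)>0$ for all $t>0$.
   Context: A function $q:\mathbb{R}\to\mathbb{R}$ is "as in the context" if it has the form $q(t)=k\,t^{2m}e^{\mu t^2}\prod_n\left(1+t^2/\beta_n^2\right)$, where $k>0$, $\mu\ge 0$, $m$ is a positive integer, and $(\beta_n)$ is a finite or infinite sequence of nonzero real numbers with $\sum_n \beta_n^{-2}<\infty$ (the product is taken to be $1$ if there are no $\beta_n$), and there exist constants $T>0$ and $\alpha>0$ such that $q(t)>t^{2+\alpha}$ for all real $t\ge T$. *)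

theory Defs
  imports "HOL-Analysis.Analysis"
begin

text \<open>A function q is "as in the context": q(t) = k t^(2m) e^(mu t^2) prod_n (1 + t^2/beta_n^2),
  with the (finite or infinite) sequence beta indexed by an arbitrary index set I of naturals
  (I finite: finite sequence; I infinite: infinite sequence).\<close>
definition as_in_context :: "(real \<Rightarrow> real) \<Rightarrow> bool" where
  "as_in_context q \<longleftrightarrow>
     (\<exists>(k::real) (\<mu>::real) (m::nat) (I::nat set) (\<beta>::nat \<Rightarrow> real).
        k > 0 \<and> \<mu> \<ge> 0 \<and> m > 0 \<and>
        (\<forall>n\<in>I. \<beta> n \<noteq> 0) \<and>
        summable (\<lambda>n. if n \<in> I then 1 / (\<beta> n)^2 else 0) \<and>
        (\<forall>t. q t = k * t^(2*m) * exp (\<mu> * t^2) *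
                    (\<Prod>n. if n \<in> I then 1 + t^2 / (\<beta> n)^2 else 1)) \<and>
        (\<exists>T>0. \<exists>\<alpha>>0. \<forall>t\<ge>T. q t > t powr (2 + \<alpha>)))"

end

theory Submission
  imports Defs "HOL-Probability.Distributions"
begin

text \<open>
  Proof idea.  Write \<open>f = exp (- q1)\<close> and \<open>g = exp (- q2)\<close>, so that \<open>c = f * g\<close> is a convolution.

  (1) Each function \<open>q\<close> as in the context has the normal form \<open>q t = k t^(2m) exp (E t)\<close>, where
  \<open>E t = \<mu> t^2 + \<Sum>n. ln (1 + t^2 / \<beta>\<^sub>n^2)\<close> is nonnegative, nondecreasing in \<open>|t|\<close> and has a
  derivative of linear growth.  Consequently \<open>q\<close> is differentiable, even, strictly increasing
  in \<open>|t|\<close>, bounded below by \<open>k t^2 - k\<close>, and \<open>|q'| exp (- q)\<close> grows at most linearly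
  (locale \<open>monomial_times_exp\<close>).

  (2) A general convolution lemma: if \<open>f\<close> is Gaussian-dominated and strictly decreasing in
  \<open>|x|\<close>, and \<open>g\<close> is bounded and even with a derivative of linear growth that is negative on
  \<open>(0,\<infinity>)\<close>, then \<open>f * g\<close> is even and positive, may be differentiated under the integral sign
  (dominated convergence plus the mean value theorem), and its derivative at \<open>t > 0\<close> is
  negative: pairing \<open>u\<close> with \<open>-u\<close> in \<open>\<integral> f(t - u) g'(u) du\<close> gives an integrand of fixed sign.
\<close>

lemma gaussian_integrable:
  fixes k :: real assumes k: "k > 0"
  shows "integrable lborel (\<lambda>x. exp (- k * x\<^sup>2))"
    and "integrable lborel (\<lambda>x. exp (- k * x\<^sup>2) * \<bar>x\<bar>)"
proof -
  define \<sigma> where "\<sigma> = sqrt (1 / (2 * k))"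
  have \<sigma>_pos: "\<sigma> > 0" using k by (simp add: \<sigma>_def)
  have \<sigma>_sq: "\<sigma>\<^sup>2 = 1 / (2*k)" using k by (simp add: \<sigma>_def)
  define A where "A = sqrt (2 * pi * \<sigma>\<^sup>2)"
  have gauss_eq: "exp (- k * x\<^sup>2) = A * normal_density 0 \<sigma> x" for x
  proof -
    have "A * normal_density 0 \<sigma> x = A * (1 / A) * exp (- x\<^sup>2 / (2 * \<sigma>\<^sup>2))"
      unfolding normal_density_def A_def by simp
    also have "A * (1 / A) = 1" using \<sigma>_pos unfolding A_def by simp
    also have "- x\<^sup>2 / (2 * \<sigma>\<^sup>2) = - k * x\<^sup>2" using k unfolding \<sigma>_sq by (simp add: field_simps)
    finally show ?thesis by simp
  qed
  show "integrable lborel (\<lambda>x. exp (- k * x\<^sup>2))"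
    unfolding gauss_eq using \<sigma>_pos by (intro integrable_mult_right integrable_normal_density) auto
  have "integrable lborel (\<lambda>x. A * (normal_density 0 \<sigma> x * \<bar>x - 0\<bar>^1))"
    using \<sigma>_pos by (intro integrable_mult_right integrable_normal_moment_abs) auto
  then show "integrable lborel (\<lambda>x. exp (- k * x\<^sup>2) * \<bar>x\<bar>)"
    unfolding gauss_eq by (simp add: mult.assoc)
qed

lemma lborel_integral_pos:
  fixes f :: "real \<Rightarrow> real"
  assumes f_int: "integrable lborel f" and f_nonneg: "\<And>x. f x \<ge> 0"
    and f_pos: "\<And>x. x \<noteq> a \<Longrightarrow> f x > 0"
  shows "(LBINT x. f x) > 0"
proof -
  have "(LBINT x. f x) \<noteq> 0"
  proof
    assume "(LBINT x. f x) = 0"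
    then have "AE x in lborel. f x = 0"
      using f_int f_nonneg by (subst (asm) integral_nonneg_eq_0_iff_AE) auto
    then have "AE (x::real) in lborel. False"
      using AE_lborel_singleton[of a] by eventually_elim (use f_pos in force)
    moreover have "\<not> (AE (x::real) in lborel. False)"
      using AE_iff_measurable[of UNIV lborel "\<lambda>_. False"] by simp
    ultimately show False by blast
  qed
  moreover have "(LBINT x. f x) \<ge> 0"
    using f_nonneg by (intro Bochner_Integration.integral_nonneg) auto
  ultimately show ?thesis by simp
qed

text \<open>Mean value theorem: a derivative of linear growth bounds the difference quotients
  of the function, uniformly in the increment.\<close>
lemma difference_quotient_bound:
  fixes f f' :: "real \<Rightarrow> real"
  assumes f_deriv: "\<And>x. (f has_real_derivative f' x) (at x)"
    and f'_bound: "\<And>x. \<bar>f' x\<bar> \<le> B * (1 + \<bar>x\<bar>)" and h: "h \<noteq> 0"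
  shows "\<bar>(f (x + h) - f x) / h\<bar> \<le> B * (1 + \<bar>x\<bar> + \<bar>h\<bar>)"
proof -
  have B_nonneg: "B \<ge> 0" using f'_bound[of 0] by simp
  obtain z where z: "\<bar>z - x\<bar> \<le> \<bar>h\<bar>" and quotient: "(f (x + h) - f x) / h = f' z"
  proof (cases "h > 0")
    case True
    from MVT2[of x "x+h" f f'] True f_deriv obtain z where "x < z" "z < x + h"
      "f (x + h) - f x = (x + h - x) * f' z" by auto
    then show ?thesis using that[of z] h by simp
  next
    case False
    from MVT2[of "x+h" x f f'] False h f_deriv obtain z where "x + h < z" "z < x"
      "f x - f (x + h) = (x - (x + h)) * f' z" by auto
    then show ?thesis using that[of z] h False by (simp add: field_simps)
  qed
  have "B * (1 + \<bar>z\<bar>) \<le> B * (1 + \<bar>x\<bar> + \<bar>h\<bar>)"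
    using z B_nonneg by (intro mult_left_mono) auto
  then show ?thesis using f'_bound[of z] quotient by simp
qed

lemma difference_quotients_tendsto_derivative:
  fixes f :: "real \<Rightarrow> real"
  assumes "(f has_real_derivative f') (at x)" "\<And>i. X i \<noteq> 0" "X \<longlonglongrightarrow> 0"
  shows "(\<lambda>i. (f (x + X i) - f x) / X i) \<longlonglongrightarrow> f'"
proof -
  have "((\<lambda>h. (f (x + h) - f x) / h) \<longlongrightarrow> f') (at 0)"
    using assms(1) by (simp add: DERIV_def)
  then show ?thesis
    unfolding tendsto_at_iff_sequentially using assms(2,3) by (auto simp: o_def)
qed

text \<open>The derivative of an everywhere differentiable function is Borel measurable, being
  a pointwise limit of continuous difference quotients.\<close>
lemma derivative_borel_measurable:
  fixes f f' :: "real \<Rightarrow> real"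
  assumes f_deriv: "\<And>x. (f has_real_derivative f' x) (at x)"
  shows "f' \<in> borel_measurable borel"
proof -
  have "continuous_on UNIV f"
    using f_deriv by (meson DERIV_isCont continuous_at_imp_continuous_on)
  then have [measurable]: "f \<in> borel_measurable borel"
    by (rule borel_measurable_continuous_onI)
  let ?h = "\<lambda>i::nat. inverse (real (Suc i))"
  show ?thesis
  proof (rule borel_measurable_LIMSEQ_real[where u="\<lambda>i x. (f (x + ?h i) - f x) / ?h i"])
    show "(\<lambda>i. (f (x + ?h i) - f x) / ?h i) \<longlonglongrightarrow> f' x" for x
      by (rule difference_quotients_tendsto_derivative[OF f_deriv _ LIMSEQ_inverse_real_of_nat]) simp
  qed measurable
qed

lemma derivative_of_even_is_odd:
  fixes f f' :: "real \<Rightarrow> real"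
  assumes even: "\<And>x. f (- x) = f x" and f_deriv: "\<And>x. (f has_real_derivative f' x) (at x)"
  shows "f' (- x) = - f' x"
proof -
  have "((\<lambda>x. f (- x)) has_real_derivative - f' (- x)) (at x)"
    using DERIV_chain2[OF f_deriv[of "- x"] DERIV_minus[OF DERIV_ident]] by simp
  then have "(f has_real_derivative - f' (- x)) (at x)" using even by simp
  with f_deriv[of x] show ?thesis using DERIV_unique by fastforce
qed

text \<open>The convolution of two even functions is even (substitute \<open>v \<mapsto> -v\<close>).\<close>
lemma convolution_even:
  fixes f g :: "real \<Rightarrow> real"
  assumes f_even: "\<And>x. f (- x) = f x" and g_even: "\<And>x. g (- x) = g x"
  shows "(LBINT v. f v * g (- t - v)) = (LBINT v. f v * g (t - v))"
proof -
  have "(LBINT v. f v * g (- t - v)) = (LBINT v. f (0 + -1 * v) * g (- t - (0 + -1 * v)))"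
    by (subst lborel_integral_real_affine[where c="-1" and t=0]) auto
  also have "\<dots> = (LBINT v. f v * g (t - v))"
  proof (rule Bochner_Integration.integral_cong[OF refl])
    fix v
    show "f (0 + -1 * v) * g (- t - (0 + -1 * v)) = f v * g (t - v)"
      using f_even[of v] g_even[of "t - v"] by simp
  qed
  finally show ?thesis .
qed

lemma integrable_weight_linear:
  fixes G :: "real \<Rightarrow> real"
  assumes G_int: "integrable lborel G" and G_moment: "integrable lborel (\<lambda>x. G x * \<bar>x\<bar>)"
  shows "integrable lborel (\<lambda>x. G x * (a + b * \<bar>x\<bar>))"
proof -
  have "integrable lborel (\<lambda>x. a * G x + b * (G x * \<bar>x\<bar>))"
    using G_int G_moment by (intro Bochner_Integration.integrable_add integrable_mult_right)
  then show ?thesis by (simp add: algebra_simps)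
qed

lemma integrable_linear_growth_factor:
  fixes f h G :: "real \<Rightarrow> real"
  assumes f_meas: "f \<in> borel_measurable borel" and h_meas: "h \<in> borel_measurable borel"
    and f_dom: "\<And>x. \<bar>f x\<bar> \<le> G x"
    and G_int: "integrable lborel G" and G_moment: "integrable lborel (\<lambda>x. G x * \<bar>x\<bar>)"
    and h_bound: "\<And>x. \<bar>h x\<bar> \<le> a + b * \<bar>x\<bar>"
  shows "integrable lborel (\<lambda>x. f x * h x)"
proof (rule Bochner_Integration.integrable_bound)
  show "integrable lborel (\<lambda>x. G x * (a + b * \<bar>x\<bar>))"
    using G_int G_moment by (rule integrable_weight_linear)
  show "AE x in lborel. norm (f x * h x) \<le> norm (G x * (a + b * \<bar>x\<bar>))"
  proof (rule AE_I2)
    fix x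
    have "\<bar>f x * h x\<bar> \<le> G x * (a + b * \<bar>x\<bar>)"
      unfolding abs_mult using f_dom[of x] h_bound[of x] by (intro mult_mono) auto
    then show "norm (f x * h x) \<le> norm (G x * (a + b * \<bar>x\<bar>))" by simp
  qed
qed (use f_meas h_meas in measurable)

text \<open>Differentiation under the integral sign for the convolution \<open>f * g\<close>: the difference
  quotients of \<open>g\<close> are bounded by the mean value theorem, so dominated convergence applies.\<close>
lemma convolution_has_derivative:
  fixes f g g' G :: "real \<Rightarrow> real"
  assumes f_meas: "f \<in> borel_measurable borel" and f_dom: "\<And>x. \<bar>f x\<bar> \<le> G x"
    and G_int: "integrable lborel G" and G_moment: "integrable lborel (\<lambda>x. G x * \<bar>x\<bar>)"
    and g_deriv: "\<And>x. (g has_real_derivative g' x) (at x)"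
    and g'_bound: "\<And>x. \<bar>g' x\<bar> \<le> B * (1 + \<bar>x\<bar>)"
    and conv_int: "\<And>t. integrable lborel (\<lambda>v. f v * g (t - v))"
  shows "((\<lambda>t. LBINT v. f v * g (t - v)) has_real_derivative (LBINT v. f v * g' (t - v))) (at t)"
proof -
  have B_nonneg: "B \<ge> 0" using g'_bound[of 0] by simp
  have [measurable]: "f \<in> borel_measurable borel" "g' \<in> borel_measurable borel"
    using f_meas derivative_borel_measurable[OF g_deriv] by auto
  have [measurable]: "g \<in> borel_measurable borel"
    using g_deriv by (meson DERIV_isCont continuous_at_imp_continuous_on borel_measurable_continuous_onI)
  let ?c = "\<lambda>t. LBINT v. f v * g (t - v)"
  have "((\<lambda>h. (?c (t + h) - ?c t) / h) \<longlongrightarrow> (LBINT v. f v * g' (t - v))) (at 0)"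
    unfolding tendsto_at_iff_sequentially
  proof (intro allI impI)
    fix X :: "nat \<Rightarrow> real"
    assume X_nonzero: "\<forall>i. X i \<in> UNIV - {0}" and X_lim: "X \<longlonglongrightarrow> 0"
    have X_ne: "X i \<noteq> 0" for i using X_nonzero by auto
    obtain M where M: "\<And>i. \<bar>X i\<bar> \<le> M"
      using convergent_imp_Bseq[of X] X_lim by (auto simp: convergent_def Bseq_def)
    define s where "s i v = f v * ((g (t - v + X i) - g (t - v)) / X i)" for i v
    have quotient_eq: "(?c (t + X i) - ?c t) / X i = (LBINT v. s i v)" for i
    proof -
      have "?c (t + X i) - ?c t = (LBINT v. f v * g (t + X i - v) - f v * g (t - v))"
        using conv_int by (subst Bochner_Integration.integral_diff) auto
      then have "(?c (t + X i) - ?c t) / X i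
          = (LBINT v. (f v * g (t + X i - v) - f v * g (t - v)) / X i)"
        by simp
      also have "\<dots> = (LBINT v. s i v)"
        unfolding s_def
        by (intro Bochner_Integration.integral_cong) (auto simp: algebra_simps diff_divide_distrib)
      finally show ?thesis .
    qed
    have "(\<lambda>i. LBINT v. s i v) \<longlonglongrightarrow> (LBINT v. f v * g' (t - v))"
    proof (rule integral_dominated_convergence
        [where w="\<lambda>v. G v * (B * (1 + \<bar>t\<bar> + M) + B * \<bar>v\<bar>)"])
      show "integrable lborel (\<lambda>v. G v * (B * (1 + \<bar>t\<bar> + M) + B * \<bar>v\<bar>))"
        using G_int G_moment by (rule integrable_weight_linear)
      show "AE v in lborel. (\<lambda>i. s i v) \<longlonglongrightarrow> f v * g' (t - v)"
        unfolding s_def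
        by (intro AE_I2 tendsto_mult tendsto_const
            difference_quotients_tendsto_derivative[OF g_deriv X_ne X_lim])
      show "AE v in lborel. norm (s i v) \<le> G v * (B * (1 + \<bar>t\<bar> + M) + B * \<bar>v\<bar>)" for i
      proof (rule AE_I2)
        fix v
        have "\<bar>(g (t - v + X i) - g (t - v)) / X i\<bar> \<le> B * (1 + \<bar>t - v\<bar> + \<bar>X i\<bar>)"
          by (rule difference_quotient_bound[OF g_deriv g'_bound X_ne])
        also have "\<dots> \<le> B * (1 + \<bar>t\<bar> + M) + B * \<bar>v\<bar>"
          using B_nonneg M[of i] abs_triangle_ineq4[of t v]
          by (simp add: distrib_left[symmetric] mult_left_mono)
        finally show "norm (s i v) \<le> G v * (B * (1 + \<bar>t\<bar> + M) + B * \<bar>v\<bar>)"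
          unfolding s_def real_norm_def abs_mult using f_dom[of v] by (intro mult_mono) auto
      qed
    qed (auto simp: s_def)
    then show "((\<lambda>h. (?c (t + h) - ?c t) / h) \<circ> X) \<longlonglongrightarrow> (LBINT v. f v * g' (t - v))"
      by (simp add: o_def quotient_eq)
  qed
  then show ?thesis by (simp add: DERIV_def)
qed

text \<open>Sign of the derivative: if \<open>f\<close> decreases strictly in \<open>|x|\<close> and \<open>g\<close> is odd and negative
  on \<open>(0,\<infinity>)\<close>, then pairing \<open>u\<close> with \<open>-u\<close> shows that \<open>\<integral> f(v) g(t-v) dv < 0\<close> for \<open>t > 0\<close>:
  twice its negative is \<open>\<integral> (f(t+u) - f(t-u)) g(u) du\<close>, with positive integrand for \<open>u \<noteq> 0\<close>.\<close>
lemma convolution_negative: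
  fixes f g :: "real \<Rightarrow> real"
  assumes f_decr: "\<And>a b. \<bar>a\<bar> < \<bar>b\<bar> \<Longrightarrow> f b < f a"
    and g_odd: "\<And>x. g (- x) = - g x" and g_neg: "\<And>x. x > 0 \<Longrightarrow> g x < 0"
    and conv_int: "integrable lborel (\<lambda>v. f v * g (t - v))" and t: "t > 0"
  shows "(LBINT v. f v * g (t - v)) < 0"
proof -
  define I where "I = (LBINT v. f v * g (t - v))"
  define H where "H u = f (t - u) * g u" for u
  define H' where "H' u = f (t + u) * g u" for u
  have H_shift: "(\<lambda>u. f (t + -1 * u) * g (t - (t + -1 * u))) = H" by (auto simp: H_def)
  have H_int: "integrable lborel H"
    using lborel_integrable_real_affine[OF conv_int, of "-1" t] unfolding H_shift by simp
  have I_H: "I = (LBINT u. H u)"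
    unfolding I_def H_def by (subst lborel_integral_real_affine[where c="-1" and t=t]) auto
  have H_reflect: "(\<lambda>u. H (0 + -1 * u)) = (\<lambda>u. - H' u)"
    using g_odd by (auto simp: H_def H'_def)
  have H'_int: "integrable lborel H'"
    using lborel_integrable_real_affine[OF H_int, of "-1" 0] unfolding H_reflect by simp
  have I_H': "I = - (LBINT u. H' u)"
    using I_H lborel_integral_real_affine[of "-1" H 0] unfolding H_reflect by simp
  have "(LBINT u. H' u - H u) > 0"
  proof (rule lborel_integral_pos[where a=0])
    show "integrable lborel (\<lambda>u. H' u - H u)" using H_int H'_int by auto
    show pos: "H' u - H u > 0" if "u \<noteq> 0" for u
    proof (cases "u > 0")
      case True
      then show ?thesis using f_decr[of "t - u" "t + u"] g_neg[of u] t
        by (simp add: H_def H'_def algebra_simps mult_less_cancel_right)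
    next
      case False
      then have "g u > 0" using g_neg[of "- u"] g_odd[of u] that by simp
      then show ?thesis using f_decr[of "t + u" "t - u"] False that t
        by (simp add: H_def H'_def algebra_simps mult_less_cancel_right)
    qed
    show "H' u - H u \<ge> 0" for u
      using pos[of u] by (cases "u = 0") (auto simp: H_def H'_def)
  qed
  also have "(LBINT u. H' u - H u) = - 2 * I"
    using H_int H'_int I_H I_H' by (subst Bochner_Integration.integral_diff) auto
  finally show ?thesis unfolding I_def by simp
qed

lemma convolution_even_positive_decreasing:
  fixes f g g' c :: "real \<Rightarrow> real" and K k B :: real
  assumes f_cont: "continuous_on UNIV f" and f_pos: "\<And>x. f x > 0"
    and f_even: "\<And>x. f (- x) = f x" and f_decr: "\<And>a b. \<bar>a\<bar> < \<bar>b\<bar> \<Longrightarrow> f b < f a"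
    and f_gauss: "\<And>x. f x \<le> K * exp (- k * x\<^sup>2)" and k: "k > 0"
    and g_pos: "\<And>x. g x > 0" and g_le_one: "\<And>x. g x \<le> 1" and g_even: "\<And>x. g (- x) = g x"
    and g_deriv: "\<And>x. (g has_real_derivative g' x) (at x)"
    and g'_neg: "\<And>x. x > 0 \<Longrightarrow> g' x < 0"
    and g'_bound: "\<And>x. \<bar>g' x\<bar> \<le> B * (1 + \<bar>x\<bar>)"
    and c_def: "\<And>t. c t = (LBINT v. f v * g (t - v))"
  shows "(\<forall>t. c (- t) = c t) \<and> (\<forall>t. c t > 0) \<and>
         (\<forall>t>0. \<exists>D. (c has_real_derivative D) (at t) \<and> D < 0)"
proof -
  have c_eq: "c = (\<lambda>t. LBINT v. f v * g (t - v))" using c_def by auto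
  define G where "G x = K * exp (- k * x\<^sup>2)" for x
  have G_int: "integrable lborel G"
    unfolding G_def using gaussian_integrable(1)[OF k] by simp
  have G_moment: "integrable lborel (\<lambda>x. G x * \<bar>x\<bar>)"
    unfolding G_def using integrable_mult_right[OF gaussian_integrable(2)[OF k], of K]
    by (simp add: mult.assoc)
  have f_dom: "\<bar>f x\<bar> \<le> G x" for x
    using f_pos[of x] f_gauss[of x] by (simp add: G_def)
  have [measurable]: "f \<in> borel_measurable borel"
    using f_cont by (rule borel_measurable_continuous_onI)
  have [measurable]: "g \<in> borel_measurable borel"
    using g_deriv by (meson DERIV_isCont continuous_at_imp_continuous_on borel_measurable_continuous_onI)
  have [measurable]: "g' \<in> borel_measurable borel"
    using g_deriv by (rule derivative_borel_measurable)
  have conv_int: "integrable lborel (\<lambda>v. f v * g (t - v))" for t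
    by (rule integrable_linear_growth_factor[OF _ _ f_dom G_int G_moment, where a=1 and b=0])
       (use g_pos g_le_one in \<open>auto simp: less_imp_le\<close>)
  have deriv_int: "integrable lborel (\<lambda>v. f v * g' (t - v))" for t
  proof (rule integrable_linear_growth_factor[OF _ _ f_dom G_int G_moment,
        where a="B * (1 + \<bar>t\<bar>)" and b=B])
    have B_nonneg: "B \<ge> 0" using g'_bound[of 0] by simp
    show "\<bar>g' (t - x)\<bar> \<le> B * (1 + \<bar>t\<bar>) + B * \<bar>x\<bar>" for x
      using g'_bound[of "t - x"] mult_left_mono[OF abs_triangle_ineq4[of t x] B_nonneg]
      by (simp add: algebra_simps)
  qed auto
  have "c (- t) = c t" for t
    unfolding c_eq using f_even g_even by (rule convolution_even)
  moreover have "c t > 0" for t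
    unfolding c_eq using conv_int
    by (rule lborel_integral_pos[where a=0]) (use f_pos g_pos in \<open>auto intro: less_imp_le\<close>)
  moreover have "(c has_real_derivative (LBINT v. f v * g' (t - v))) (at t)" for t
    unfolding c_eq using _ f_dom G_int G_moment g_deriv g'_bound conv_int
    by (rule convolution_has_derivative) measurable
  moreover have "(LBINT v. f v * g' (t - v)) < 0" if "t > 0" for t
    using f_decr derivative_of_even_is_odd[OF g_even g_deriv] g'_neg deriv_int that
    by (rule convolution_negative)
  ultimately show ?thesis by blast
qed

text \<open>The logarithm \<open>\<Sum>n. ln (1 + t^2 a n)\<close> of the infinite product \<open>\<Prod>n. 1 + t^2 a n\<close>,
  and its termwise derivative; for \<open>a \<ge> 0\<close> summable both series converge.\<close>
definition log_series :: "(nat \<Rightarrow> real) \<Rightarrow> real \<Rightarrow> real" where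
  "log_series a t = (\<Sum>n. ln (1 + t\<^sup>2 * a n))"

definition log_series_deriv :: "(nat \<Rightarrow> real) \<Rightarrow> real \<Rightarrow> real" where
  "log_series_deriv a t = (\<Sum>n. 2 * t * a n / (1 + t\<^sup>2 * a n))"

context
  fixes a :: "nat \<Rightarrow> real"
  assumes a_nonneg: "\<And>n. a n \<ge> 0" and a_summable: "summable a"
begin

lemma log_series_term_pos: "1 + t\<^sup>2 * a n > 0"
  using a_nonneg[of n] by (simp add: add_pos_nonneg)

text \<open>Both series are dominated termwise by multiples of \<open>a\<close>, using \<open>ln (1 + x) \<le> x\<close>.\<close>
lemma log_series_summable: "summable (\<lambda>n. ln (1 + t\<^sup>2 * a n))"
proof (rule summable_comparison_test[OF _ summable_mult[OF a_summable, of "t\<^sup>2"]])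
  show "\<exists>N. \<forall>n\<ge>N. norm (ln (1 + t\<^sup>2 * a n)) \<le> t\<^sup>2 * a n"
    using a_nonneg by (intro exI[of _ 0] allI impI) (simp add: ln_add_one_self_le_self)
qed

lemma log_series_deriv_term_bound: "\<bar>2 * t * a n / (1 + t\<^sup>2 * a n)\<bar> \<le> 2 * \<bar>t\<bar> * a n"
proof -
  have "\<bar>2 * t * a n / (1 + t\<^sup>2 * a n)\<bar> = 2 * \<bar>t\<bar> * a n / (1 + t\<^sup>2 * a n)"
    using log_series_term_pos[of t n] a_nonneg[of n] by (simp add: abs_mult)
  also have "\<dots> \<le> 2 * \<bar>t\<bar> * a n / 1"
    using a_nonneg[of n] by (intro divide_left_mono) (auto simp: add_pos_nonneg)
  finally show ?thesis by simp
qed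

lemma log_series_deriv_summable: "summable (\<lambda>n. norm (2 * t * a n / (1 + t\<^sup>2 * a n)))"
  by (rule summable_comparison_test[OF _ summable_mult[OF a_summable, of "2 * \<bar>t\<bar>"]])
     (use log_series_deriv_term_bound in auto)

text \<open>Termwise differentiation is justified by the Weierstrass M-test on bounded balls.\<close>
lemma log_series_has_derivative:
  "(log_series a has_real_derivative log_series_deriv a t) (at t)"
proof -
  define R where "R = \<bar>t\<bar> + 1"
  have "((\<lambda>x. \<Sum>n. ln (1 + x\<^sup>2 * a n)) has_field_derivative
      (\<Sum>n. 2 * t * a n / (1 + t\<^sup>2 * a n))) (at t)"
  proof (rule has_field_derivative_series'(2)[of "ball 0 R" _ _ 0])
    show "((\<lambda>x. ln (1 + x\<^sup>2 * a n)) has_field_derivative 2 * x * a n / (1 + x\<^sup>2 * a n))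
        (at x within ball 0 R)" for n x
      using log_series_term_pos[of x n]
      by (auto intro!: derivative_eq_intros simp: field_simps power2_eq_square)
    show "uniformly_convergent_on (ball 0 R) (\<lambda>n x. \<Sum>i<n. 2 * x * a i / (1 + x\<^sup>2 * a i))"
    proof (rule Weierstrass_m_test'[of _ _ "\<lambda>n. 2 * R * a n"])
      show "summable (\<lambda>n. 2 * R * a n)" using a_summable by (intro summable_mult)
      fix n and x :: real assume "x \<in> ball 0 R"
      then have "2 * \<bar>x\<bar> * a n \<le> 2 * R * a n" using a_nonneg[of n] by (intro mult_right_mono) auto
      then show "norm (2 * x * a n / (1 + x\<^sup>2 * a n)) \<le> 2 * R * a n"
        using log_series_deriv_term_bound[of x n] by simp
    qed
  qed (auto simp: R_def add_pos_nonneg)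
  then show ?thesis unfolding log_series_def[abs_def] log_series_deriv_def by simp
qed

lemma log_series_nonneg: "log_series a t \<ge> 0"
  unfolding log_series_def
  using log_series_summable[of t] a_nonneg by (intro suminf_nonneg) auto

lemma log_series_mono: "\<bar>s\<bar> \<le> \<bar>t\<bar> \<Longrightarrow> log_series a s \<le> log_series a t"
proof -
  assume "\<bar>s\<bar> \<le> \<bar>t\<bar>"
  then have "s\<^sup>2 \<le> t\<^sup>2" by (metis abs_le_square_iff)
  then have "ln (1 + s\<^sup>2 * a n) \<le> ln (1 + t\<^sup>2 * a n)" for n
    using log_series_term_pos[of s n] a_nonneg[of n]
    by (subst ln_le_cancel_iff) (auto intro: mult_right_mono log_series_term_pos)
  then show ?thesis unfolding log_series_def
    using log_series_summable by (intro suminf_le) auto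
qed

lemma log_series_deriv_nonneg: "t \<ge> 0 \<Longrightarrow> log_series_deriv a t \<ge> 0"
  unfolding log_series_deriv_def using log_series_deriv_summable[of t] a_nonneg
  by (intro suminf_nonneg) (auto dest: summable_norm_cancel intro: log_series_term_pos less_imp_le)

lemma log_series_deriv_bound: "\<bar>log_series_deriv a t\<bar> \<le> 2 * \<bar>t\<bar> * suminf a"
proof -
  have "\<bar>log_series_deriv a t\<bar> \<le> (\<Sum>n. norm (2 * t * a n / (1 + t\<^sup>2 * a n)))"
    unfolding log_series_deriv_def using summable_norm[OF log_series_deriv_summable] by simp
  also have "\<dots> \<le> (\<Sum>n. 2 * \<bar>t\<bar> * a n)"
    using log_series_deriv_summable log_series_deriv_term_bound
      summable_mult[OF a_summable, of "2 * \<bar>t\<bar>"]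
    by (intro suminf_le) auto
  also have "\<dots> = 2 * \<bar>t\<bar> * suminf a" using a_summable by (rule suminf_mult)
  finally show ?thesis .
qed

lemma prodinf_eq_exp_log_series: "(\<Prod>n. 1 + t\<^sup>2 * a n) = exp (log_series a t)"
  using prodinf_exp[OF log_series_summable[of t]] log_series_term_pos[of t]
  by (simp add: log_series_def)

end

locale monomial_times_exp =
  fixes q E E' :: "real \<Rightarrow> real" and k C :: real and m :: nat
  assumes k_pos: "k > 0" and m_pos: "m > 0"
    and q_eq: "\<And>t. q t = k * t ^ (2 * m) * exp (E t)"
    and E_deriv: "\<And>t. (E has_real_derivative E' t) (at t)"
    and E_nonneg: "\<And>t. E t \<ge> 0"
    and E_mono: "\<And>s t. \<bar>s\<bar> \<le> \<bar>t\<bar> \<Longrightarrow> E s \<le> E t"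
    and E'_nonneg: "\<And>t. t \<ge> 0 \<Longrightarrow> E' t \<ge> 0"
    and E'_bound: "\<And>t. \<bar>E' t\<bar> \<le> C * \<bar>t\<bar>"
begin

lemma C_nonneg: "C \<ge> 0"
  using E'_bound[of 1] by simp

lemma q_abs_form: "q t = k * exp (E t) * \<bar>t\<bar> ^ (2 * m)"
  unfolding q_eq by (simp add: power_even_abs)

lemma q_nonneg: "q t \<ge> 0"
  unfolding q_abs_form using k_pos by simp

lemma q_even: "q (- t) = q t"
  using E_mono[of t "- t"] E_mono[of "- t" t] unfolding q_abs_form by simp

lemma q_strict_mono:
  assumes "\<bar>s\<bar> < \<bar>t\<bar>" shows "q s < q t"
proof -
  have "\<bar>s\<bar> ^ (2 * m) < \<bar>t\<bar> ^ (2 * m)"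
    using assms m_pos by (intro power_strict_mono) auto
  moreover have "exp (E s) \<le> exp (E t)" using E_mono[of s t] assms by simp
  ultimately have "exp (E s) * \<bar>s\<bar> ^ (2 * m) < exp (E t) * \<bar>t\<bar> ^ (2 * m)"
    by (intro mult_le_less_imp_less) auto
  then show ?thesis unfolding q_abs_form using k_pos by (simp add: mult.assoc)
qed

text \<open>Since \<open>m \<ge> 1\<close> and \<open>E \<ge> 0\<close>, \<open>q\<close> grows at least quadratically.\<close>
lemma q_quadratic_lower: "k * t\<^sup>2 - k \<le> q t"
proof (cases "\<bar>t\<bar> \<ge> 1")
  case True
  have "\<bar>t\<bar>\<^sup>2 \<le> \<bar>t\<bar> ^ (2 * m)" using True m_pos by (intro power_increasing) auto
  also have "\<dots> \<le> exp (E t) * \<bar>t\<bar> ^ (2 * m)"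
    using E_nonneg[of t] by (intro mult_le_cancel_right1[THEN iffD2]) auto
  finally have "k * t\<^sup>2 \<le> q t"
    unfolding q_abs_form using k_pos by (simp add: mult.assoc)
  then show ?thesis using k_pos by linarith
next
  case False
  then have "t\<^sup>2 \<le> 1" by (simp add: abs_square_le_1)
  then have "k * t\<^sup>2 \<le> k" using k_pos by (intro mult_left_le) auto
  then show ?thesis using q_nonneg[of t] by linarith
qed

lemma abs_power_split: "\<bar>t\<bar> ^ (2 * m) = \<bar>t\<bar> * \<bar>t\<bar> ^ (2 * m - 1)"
proof -
  have "2 * m = Suc (2 * m - 1)" using m_pos by simp
  then show ?thesis by (metis power_Suc)
qed

definition dq :: "real \<Rightarrow> real" where
  "dq t = k * (real (2 * m) * t ^ (2 * m - 1) + t ^ (2 * m) * E' t) * exp (E t)"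

lemma q_has_derivative: "(q has_real_derivative dq t) (at t)"
proof -
  have "q = (\<lambda>t. k * t ^ (2 * m) * exp (E t))" using q_eq by auto
  then show ?thesis
    unfolding dq_def using E_deriv[of t]
    by (auto intro!: derivative_eq_intros simp: algebra_simps)
qed

lemma dq_pos: "t > 0 \<Longrightarrow> dq t > 0"
  unfolding dq_def using k_pos m_pos E'_nonneg[of t] by (simp add: add_pos_nonneg)

lemma dq_abs_le: "\<bar>dq t\<bar> \<le> k * exp (E t) * (\<bar>t\<bar> ^ (2 * m - 1) * (2 * m + C * t\<^sup>2))"
proof -
  have "\<bar>real (2 * m) * t ^ (2 * m - 1) + t ^ (2 * m) * E' t\<bar>
      \<le> real (2 * m) * \<bar>t\<bar> ^ (2 * m - 1) + \<bar>t\<bar> ^ (2 * m) * (C * \<bar>t\<bar>)"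
    using abs_triangle_ineq[of "real (2 * m) * t ^ (2 * m - 1)" "t ^ (2 * m) * E' t"]
      mult_left_mono[OF E'_bound[of t], of "\<bar>t\<bar> ^ (2 * m)"]
    by (simp add: abs_mult power_abs)
  also have "\<dots> = \<bar>t\<bar> ^ (2 * m - 1) * (2 * m + C * t\<^sup>2)"
    unfolding abs_power_split by (simp add: algebra_simps power2_eq_square)
  finally show ?thesis
    unfolding dq_def abs_mult using k_pos by (simp add: mult_left_mono)
qed

lemma dq_bound_large:
  assumes "\<bar>t\<bar> \<ge> 1" shows "\<bar>dq t\<bar> \<le> q t * (2 * m + C * \<bar>t\<bar>)"
proof -
  define P where "P = \<bar>t\<bar> ^ (2 * m - 1)"
  have "P * (2 * m) \<le> (\<bar>t\<bar> * P) * (2 * m)"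
    using mult_right_mono[OF assms, of P] by (intro mult_right_mono) (auto simp: P_def)
  moreover have "P * (C * t\<^sup>2) = (\<bar>t\<bar> * P) * (C * \<bar>t\<bar>)"
    by (simp add: power2_eq_square abs_mult_self_eq algebra_simps)
  ultimately have "P * (2 * m) + P * (C * t\<^sup>2) \<le> (\<bar>t\<bar> * P) * (2 * m) + (\<bar>t\<bar> * P) * (C * \<bar>t\<bar>)"
    by linarith
  then have "P * (2 * m + C * t\<^sup>2) \<le> (\<bar>t\<bar> * P) * (2 * m + C * \<bar>t\<bar>)"
    by (simp only: distrib_left)
  then have "\<bar>t\<bar> ^ (2 * m - 1) * (2 * m + C * t\<^sup>2) \<le> \<bar>t\<bar> ^ (2 * m) * (2 * m + C * \<bar>t\<bar>)"
    unfolding abs_power_split P_def .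
  then have "\<bar>dq t\<bar> \<le> k * exp (E t) * (\<bar>t\<bar> ^ (2 * m) * (2 * m + C * \<bar>t\<bar>))"
    using k_pos by (intro order_trans[OF dq_abs_le mult_left_mono]) auto
  then show ?thesis unfolding q_abs_form by (simp add: mult.assoc)
qed

lemma dq_bound_small:
  assumes "\<bar>t\<bar> \<le> 1" shows "\<bar>dq t\<bar> \<le> k * exp (E 1) * (2 * m + C)"
proof -
  have "\<bar>t\<bar> ^ (2 * m - 1) \<le> 1" using assms by (intro power_le_one) auto
  moreover have "C * t\<^sup>2 \<le> C"
    using assms C_nonneg abs_square_le_1[of t] by (intro mult_left_le) auto
  ultimately have factor: "\<bar>t\<bar> ^ (2 * m - 1) * (2 * m + C * t\<^sup>2) \<le> 1 * (2 * m + C)"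
    using C_nonneg by (intro mult_mono) auto
  have "exp (E t) \<le> exp (E 1)" using E_mono[of t 1] assms by simp
  then have "k * exp (E t) * (\<bar>t\<bar> ^ (2 * m - 1) * (2 * m + C * t\<^sup>2))
      \<le> k * exp (E 1) * (1 * (2 * m + C))"
    using k_pos C_nonneg by (intro mult_mono[OF mult_left_mono factor]) auto
  then show ?thesis using dq_abs_le[of t] by simp
qed

text \<open>Hence the derivative \<open>- q' exp (- q)\<close> of the kernel \<open>exp (- q)\<close> has linear growth;
  away from the origin this uses \<open>q exp (- q) \<le> 1\<close>.\<close>
lemma kernel_derivative_bound: "\<exists>B. \<forall>t. \<bar>dq t\<bar> * exp (- q t) \<le> B * (1 + \<bar>t\<bar>)"
proof (intro exI allI)
  fix t
  define B where "B = (2 * m + C) * (1 + k * exp (E 1))"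
  have B_ge: "k * exp (E 1) * (2 * m + C) \<le> B" "2 * m + C \<le> B"
    using C_nonneg k_pos by (auto simp: B_def algebra_simps)
  show "\<bar>dq t\<bar> * exp (- q t) \<le> B * (1 + \<bar>t\<bar>)"
  proof (cases "\<bar>t\<bar> \<ge> 1")
    case True
    have "q t \<le> exp (q t)" using exp_ge_add_one_self[of "q t"] by linarith
    then have q_exp: "q t * exp (- q t) \<le> 1" by (simp add: exp_minus field_simps)
    have "\<bar>dq t\<bar> * exp (- q t) \<le> (q t * exp (- q t)) * (2 * m + C * \<bar>t\<bar>)"
      using mult_right_mono[OF dq_bound_large[OF True] exp_ge_zero] by (simp add: mult_ac)
    also have "\<dots> \<le> 2 * m + C * \<bar>t\<bar>"
      using q_exp C_nonneg by (intro mult_left_le_one_le) (auto simp: q_nonneg)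
    also have "\<dots> \<le> (2 * m + C) * (1 + \<bar>t\<bar>)"
      using C_nonneg by (simp add: algebra_simps)
    also have "\<dots> \<le> B * (1 + \<bar>t\<bar>)"
      using B_ge by (intro mult_right_mono) auto
    finally show ?thesis .
  next
    case False
    have "\<bar>dq t\<bar> * exp (- q t) \<le> \<bar>dq t\<bar>"
      using q_nonneg[of t] by (intro mult_left_le) auto
    also have "\<dots> \<le> B" using dq_bound_small[of t] False B_ge by simp
    also have "\<dots> \<le> B * (1 + \<bar>t\<bar>)" using B_ge C_nonneg by (simp add: algebra_simps)
    finally show ?thesis .
  qed
qed

lemma kernel_has_derivative: "((\<lambda>x. exp (- q x)) has_real_derivative - dq x * exp (- q x)) (at x)"
  using q_has_derivative by (auto intro!: derivative_eq_intros)

lemma kernel_gaussian_bound: "exp (- q x) \<le> exp k * exp (- k * x\<^sup>2)"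
  using q_quadratic_lower[of x] by (simp add: exp_add[symmetric])

lemma q_continuous: "continuous_on UNIV q"
  using q_has_derivative by (meson DERIV_isCont continuous_at_imp_continuous_on)

end

lemma as_in_context_normal_form:
  assumes "as_in_context q"
  obtains E E' k C m where "monomial_times_exp q E E' k C m"
proof -
  from assms obtain k \<mu> m I \<beta> where k: "k > 0" and \<mu>: "\<mu> \<ge> 0" and m: "m > 0"
    and summable: "summable (\<lambda>n. if n \<in> I then 1 / (\<beta> n)^2 else 0)"
    and q_def: "\<And>t. q t = k * t^(2*m) * exp (\<mu> * t^2) *
                    (\<Prod>n. if n \<in> I then 1 + t^2 / (\<beta> n)^2 else 1)"
    unfolding as_in_context_def by blast
  define a where "a n = (if n \<in> I then 1 / (\<beta> n)^2 else 0)" for n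
  have a_nonneg: "a n \<ge> 0" for n by (simp add: a_def)
  have a_summable: "summable a" using summable by (simp add: a_def [abs_def])
  define E where "E t = \<mu> * t\<^sup>2 + log_series a t" for t
  define E' where "E' t = 2 * \<mu> * t + log_series_deriv a t" for t
  have "monomial_times_exp q E E' k (2 * \<mu> + 2 * suminf a) m"
  proof
    have "(\<Prod>n. if n \<in> I then 1 + t^2 / (\<beta> n)^2 else 1) = (\<Prod>n. 1 + t\<^sup>2 * a n)" for t
      by (rule arg_cong[where f=prodinf]) (auto simp: a_def)
    then show "q t = k * t ^ (2 * m) * exp (E t)" for t
      unfolding q_def E_def
      by (simp add: prodinf_eq_exp_log_series[OF a_nonneg a_summable] exp_add)
    show "(E has_real_derivative E' t) (at t)" for t
      unfolding E_def[abs_def] E'_def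
      using log_series_has_derivative[OF a_nonneg a_summable]
      by (auto intro!: derivative_eq_intros)
    show "E t \<ge> 0" for t
      unfolding E_def using log_series_nonneg[OF a_nonneg a_summable] \<mu> by simp
    show "E s \<le> E t" if "\<bar>s\<bar> \<le> \<bar>t\<bar>" for s t
    proof -
      have "s\<^sup>2 \<le> t\<^sup>2" using that by (metis abs_le_square_iff)
      then show ?thesis
        unfolding E_def using log_series_mono[OF a_nonneg a_summable that] \<mu>
        by (intro add_mono mult_left_mono) auto
    qed
    show "E' t \<ge> 0" if "t \<ge> 0" for t
      unfolding E'_def using log_series_deriv_nonneg[OF a_nonneg a_summable that] \<mu> that by simp
    show "\<bar>E' t\<bar> \<le> (2 * \<mu> + 2 * suminf a) * \<bar>t\<bar>" for t
    proof -
      have "\<bar>E' t\<bar> \<le> \<bar>2 * \<mu> * t\<bar> + \<bar>log_series_deriv a t\<bar>"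
        unfolding E'_def by (rule abs_triangle_ineq)
      also have "\<dots> \<le> 2 * \<mu> * \<bar>t\<bar> + 2 * \<bar>t\<bar> * suminf a"
        using log_series_deriv_bound[OF a_nonneg a_summable, of t] \<mu> by (simp add: abs_mult)
      finally show ?thesis by (simp add: algebra_simps)
    qed
  qed (use k m in auto)
  then show ?thesis by (rule that)
qed

theorem mainTheorem6:
  fixes q1 q2 c :: "real \<Rightarrow> real"
  assumes "as_in_context q1" and "as_in_context q2"
    and "\<And>t. c t = (LBINT v. exp (- q1 v) * exp (- q2 (t - v)))"
  shows "(\<forall>t. c (- t) = c t) \<and> (\<forall>t. c t > 0) \<and>
         (\<forall>t>0. \<exists>D. (c has_real_derivative D) (at t) \<and> D < 0)"
proof -
  obtain E1 E1' k1 C1 m1 where "monomial_times_exp q1 E1 E1' k1 C1 m1"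
    using as_in_context_normal_form[OF assms(1)] .
  then interpret Q1: monomial_times_exp q1 E1 E1' k1 C1 m1 .
  obtain E2 E2' k2 C2 m2 where "monomial_times_exp q2 E2 E2' k2 C2 m2"
    using as_in_context_normal_form[OF assms(2)] .
  then interpret Q2: monomial_times_exp q2 E2 E2' k2 C2 m2 .
  obtain B where B: "\<And>t. \<bar>Q2.dq t\<bar> * exp (- q2 t) \<le> B * (1 + \<bar>t\<bar>)"
    using Q2.kernel_derivative_bound by blast
  show ?thesis
  proof (rule convolution_even_positive_decreasing[where K="exp k1" and k=k1 and B=B
        and g'="\<lambda>x. - Q2.dq x * exp (- q2 x)"])
    show "continuous_on UNIV (\<lambda>x. exp (- q1 x))"
      using Q1.q_continuous by (intro continuous_on_exp continuous_on_minus)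
    show "\<bar>- Q2.dq x * exp (- q2 x)\<bar> \<le> B * (1 + \<bar>x\<bar>)" for x
      using B[of x] by (simp add: abs_mult)
  qed (use Q1.q_even Q1.q_strict_mono Q1.kernel_gaussian_bound Q1.k_pos Q2.q_even Q2.q_nonneg
        Q2.kernel_has_derivative Q2.dq_pos assms(3) in auto)
qed

end
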